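(* Let $X$ be a countable set and $\mathcal{A},\mathcal{B}\subseteq\mathcal{P}_\infty(X)$ be $C$-measurable M-families. Then $\mathcal{A}\cap\mathcal{B}$ is an M-family.
   Context: $\mathcal{P}_\infty(X)$: infinite subsets of $X$ with the topology of $2^X$. $C$-measurable: in the smallest $\sigma$-algebra containing the open sets and closed under the Souslin operation. An M-family is a hereditary (closed under infinite subsets) family $\mathcal{A}$ such that for every sequence $(A_n)_n$ in $\mathcal{A}$ there is $A\in\mathcal{A}$ with $A\setminus\bigcup_{i\ge n}A_i$ finite for every $n$. *)

theory Defs
  imports "HOL-Analysis.Analysis"
begin

definition Pinf :: "'a set \<Rightarrow> 'a set set" where
  "Pinf X = {A. A \<subseteq> X \<and> infinite A}"

text \<open>Basic open sets of the Cantor space \<open>2^X\<close> (identified with \<open>Pow X\<close>):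
  sets containing the finite set \<open>F\<close> and disjoint from the finite set \<open>G\<close>.\<close>
definition cyl :: "'a set \<Rightarrow> 'a set \<Rightarrow> 'a set \<Rightarrow> 'a set set" where
  "cyl X F G = {A. A \<subseteq> X \<and> F \<subseteq> A \<and> A \<inter> G = {}}"

text \<open>Open subsets of \<open>2^X\<close> in the product topology.\<close>
definition cantor_open :: "'a set \<Rightarrow> 'a set set \<Rightarrow> bool" where
  "cantor_open X U \<longleftrightarrow> U \<subseteq> Pow X \<and>
     (\<forall>A\<in>U. \<exists>F G. finite F \<and> finite G \<and> F \<subseteq> X \<and> G \<subseteq> X \<and> A \<in> cyl X F G \<and> cyl X F G \<subseteq> U)"

definition souslin :: "(nat list \<Rightarrow> 'b set) \<Rightarrow> 'b set" where
  "souslin S = (\<Union>\<sigma>::nat \<Rightarrow> nat. \<Inter>n. S (map \<sigma> [0..<Suc n]))"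

text \<open>C-measurable subsets of \<open>P_\<infinity>(X)\<close>: the smallest \<sigma>-algebra on \<open>P_\<infinity>(X)\<close>
  containing the (relatively) open sets and closed under the Souslin operation.\<close>
inductive_set Cmeas :: "'a set \<Rightarrow> 'a set set set" for X :: "'a set" where
  open_in: "cantor_open X U \<Longrightarrow> U \<inter> Pinf X \<in> Cmeas X"
| compl: "A \<in> Cmeas X \<Longrightarrow> Pinf X - A \<in> Cmeas X"
| cunion: "(\<And>n::nat. A n \<in> Cmeas X) \<Longrightarrow> (\<Union>n. A n) \<in> Cmeas X"
| souslin: "(\<And>s. S s \<in> Cmeas X) \<Longrightarrow> souslin S \<in> Cmeas X"

definition M_family :: "'a set \<Rightarrow> 'a set set \<Rightarrow> bool" where
  "M_family X \<A> \<longleftrightarrow> \<A> \<subseteq> Pinf X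
     \<and> (\<forall>A\<in>\<A>. \<forall>B. B \<subseteq> A \<and> infinite B \<longrightarrow> B \<in> \<A>)
     \<and> (\<forall>As::nat \<Rightarrow> 'a set. (\<forall>n. As n \<in> \<A>) \<longrightarrow>
          (\<exists>A\<in>\<A>. \<forall>n. finite (A - (\<Union>i\<in>{n..}. As i))))"

end

theory Submission
  imports Defs
begin

(*
  Given C_0, C_1, ... in A \<inter> B, fix an injection g : \<nat> \<times> \<nat> \<rightarrow> X with g c r \<in> C_c and
  code an infinite Z \<subseteq> \<nat> with increasing enumeration z_0 < z_1 < ... by the set
  code g Z = {g z_(2k) z_(2k+1) | k \<in> \<nat>}.  This is an infinite subset of X almost contained in
  every tail \<Union>_(i\<ge>n) C_i, and code g is continuous from the Ellentuck topology into 2^X.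

  Part 1 proves the needed part of Ellentuck's theorem: Ellentuck-open sets are completely
  Ramsey (Galvin-Prikry, by a fusion argument), and completely Ramsey sets are closed under
  complements, countable unions and the Souslin operation.  Hence the preimages of the
  C-measurable families A and B under code g are completely Ramsey.
  Part 2 uses the M-family property of A to show that every infinite H \<subseteq> \<nat> contains an
  infinite Z with code g Z \<in> A, so the homogeneous set provided by complete Ramseyness lies on
  the positive side; doing this for A and then inside for B gives Z with code g Z \<in> A \<inter> B,
  the required diagonal set.
*)

section \<open>Ellentuck neighbourhoods and fusion\<close>

definition Ell :: "nat set \<Rightarrow> nat set \<Rightarrow> nat set set" where
  "Ell s A = {Y. infinite Y \<and> s \<subseteq> Y \<and> Y \<subseteq> s \<union> A}"

definition beyond :: "nat set \<Rightarrow> nat set \<Rightarrow> nat set" where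
  "beyond B t = {x\<in>B. \<forall>y\<in>t. y < x}"

lemma Ell_mono: "C' \<subseteq> C \<Longrightarrow> Ell s C' \<subseteq> Ell s C"
  unfolding Ell_def by auto

lemma Ell_infinite: "Y \<in> Ell s C \<Longrightarrow> infinite Y"
  unfolding Ell_def by auto

lemma Ell_top: "infinite C \<Longrightarrow> s \<union> C \<in> Ell s C"
  unfolding Ell_def by auto

lemma Ell_empty: "Ell {} B = {Y. infinite Y \<and> Y \<subseteq> B}"
  unfolding Ell_def by auto

lemma beyond_empty [simp]: "beyond B {} = B"
  by (simp add: beyond_def)

lemma beyond_mono: "D \<subseteq> B \<Longrightarrow> beyond D t \<subseteq> beyond B t"
  unfolding beyond_def by auto

lemma infinite_beyond:
  assumes "infinite B" "finite t"
  shows "infinite (beyond B t)"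
proof -
  have "B \<subseteq> beyond B t \<union> {..Max (insert 0 t)}"
  proof
    fix x assume "x \<in> B"
    show "x \<in> beyond B t \<union> {..Max (insert 0 t)}"
    proof (cases "x \<le> Max (insert 0 t)")
      case False
      then have "\<forall>y\<in>t. y < x"
        using assms(2) by (meson Max_ge finite_insert insertCI le_less_trans not_le)
      then show ?thesis using \<open>x \<in> B\<close> by (simp add: beyond_def)
    qed simp
  qed
  then show ?thesis
    using assms(1) finite_subset by blast
qed

lemma Ell_restart:
  fixes a :: nat
  assumes Y: "Y \<in> Ell s B"
  defines "t \<equiv> {y \<in> Y - s. y < a}"
  shows "finite t" "t \<subseteq> B" "Y \<in> Ell (s \<union> t) (beyond B t)"
proof -
  show "finite t"
    unfolding t_def by (rule finite_subset[of _ "{..<a}"]) auto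
  show "t \<subseteq> B"
    using Y unfolding t_def Ell_def by auto
  show "Y \<in> Ell (s \<union> t) (beyond B t)"
  proof -
    have "Y \<subseteq> s \<union> t \<union> beyond B t"
    proof
      fix y assume "y \<in> Y"
      show "y \<in> s \<union> t \<union> beyond B t"
      proof (cases "y \<in> s \<union> t")
        case False
        then have "y \<in> B" "a \<le> y" using \<open>y \<in> Y\<close> Y unfolding Ell_def t_def by auto
        then show ?thesis unfolding beyond_def t_def by auto
      qed blast
    qed
    then show ?thesis using Y unfolding Ell_def t_def by auto
  qed
qed

lemma Ell_least_extension:
  assumes Y: "Y \<in> Ell u C" and u: "finite u"
  defines "n \<equiv> LEAST x. x \<in> Y - u"
  shows "n \<in> C" "Y \<in> Ell (insert n u) {x \<in> C. n < x}"
proof -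
  have "infinite (Y - u)"
    using Y u unfolding Ell_def by simp
  then obtain y where "y \<in> Y - u"
    using infinite_imp_nonempty by blast
  then have n: "n \<in> Y - u"
    unfolding n_def by (rule LeastI)
  have least: "n \<le> y" if "y \<in> Y - u" for y
    unfolding n_def using that by (rule Least_le)
  show "n \<in> C"
    using n Y unfolding Ell_def by auto
  have "Y \<subseteq> insert n u \<union> {x \<in> C. n < x}"
  proof
    fix y assume "y \<in> Y"
    show "y \<in> insert n u \<union> {x \<in> C. n < x}"
    proof (cases "y \<in> insert n u")
      case False
      then have "y \<in> C" "n \<le> y" "y \<noteq> n"
        using \<open>y \<in> Y\<close> Y least unfolding Ell_def by auto
      then show ?thesis by simp
    qed blast
  qed
  then show "Y \<in> Ell (insert n u) {x \<in> C. n < x}"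
    using Y n unfolding Ell_def by blast
qed

lemma shrink_for_finitely_many:
  assumes mono: "\<And>t C C'. P t C \<Longrightarrow> C' \<subseteq> C \<Longrightarrow> infinite C' \<Longrightarrow> P t C'"
    and dense: "\<And>t C. finite t \<Longrightarrow> infinite C \<Longrightarrow> \<exists>C'\<subseteq>C. infinite C' \<and> P t C'"
    and T: "finite T" "\<forall>t\<in>T. finite t"
    and C: "infinite C"
  shows "\<exists>C'\<subseteq>C. infinite C' \<and> (\<forall>t\<in>T. P t C')"
  using T C
proof (induction T arbitrary: C rule: finite_induct)
  case empty
  then show ?case by blast
next
  case (insert t T)
  obtain C1 where C1: "C1 \<subseteq> C" "infinite C1" "\<forall>t'\<in>T. P t' C1"
    using insert by blast
  obtain C2 where C2: "C2 \<subseteq> C1" "infinite C2" "P t C2"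
    using dense[of t C1] C1(2) insert.prems by auto
  have "\<forall>t'\<in>insert t T. P t' C2"
    using C1(3) C2 mono by blast
  then show ?case
    using C1(1) C2(1,2) by blast
qed

lemma fusion_sequence:
  fixes P :: "nat set \<Rightarrow> nat set \<Rightarrow> bool"
  assumes mono: "\<And>t C C'. P t C \<Longrightarrow> C' \<subseteq> C \<Longrightarrow> infinite C' \<Longrightarrow> P t C'"
    and dense: "\<And>t C. finite t \<Longrightarrow> infinite C \<Longrightarrow> \<exists>C'\<subseteq>C. infinite C' \<and> P t C'"
    and A: "infinite A"
  shows "\<exists>(b :: nat \<Rightarrow> nat) D. strict_mono b \<and> D 0 \<subseteq> A \<and> P {} (D 0) \<and> (\<forall>n. b n \<in> D n)
    \<and> (\<forall>n m. n \<le> m \<longrightarrow> D m \<subseteq> D n) \<and> (\<forall>n t. t \<subseteq> {..b n} \<longrightarrow> P t (D (Suc n)))"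
proof -
  define shrink where
    "shrink m C = (SOME C'. C' \<subseteq> C \<and> infinite C' \<and> (\<forall>t\<in>Pow {..m}. P t C'))" for m C
  have shrink: "shrink m C \<subseteq> C \<and> infinite (shrink m C) \<and> (\<forall>t\<in>Pow {..m}. P t (shrink m C))"
    if "infinite C" for m C
    unfolding shrink_def
    by (rule someI_ex) (use shrink_for_finitely_many[OF mono dense, where T="Pow {..m}" and C=C] that
        in \<open>simp add: finite_subset\<close>)
  obtain D0 where D0: "D0 \<subseteq> A" "infinite D0" "P {} D0"
    using dense[of "{}" A] A by auto
  define D where "D n = ((\<lambda>C. shrink (LEAST x. x \<in> C) (C - {LEAST x. x \<in> C})) ^^ n) D0" for n
  define b where "b n = (LEAST x. x \<in> D n)" for n
  have D_0: "D 0 = D0" and D_Suc: "D (Suc n) = shrink (b n) (D n - {b n})" for n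
    by (simp_all add: D_def b_def)
  have D_inf: "infinite (D n)" for n
    by (induction n) (use D0 shrink in \<open>simp_all add: D_0 D_Suc\<close>)
  have b_in: "b n \<in> D n" for n
  proof -
    obtain x where "x \<in> D n" using D_inf[of n] infinite_imp_nonempty by blast
    then show ?thesis unfolding b_def by (rule LeastI)
  qed
  have D_step: "D (Suc n) \<subseteq> D n - {b n}"
    and P_D: "\<And>t. t \<subseteq> {..b n} \<Longrightarrow> P t (D (Suc n))" for n
    using shrink[of "D n - {b n}" "b n"] D_inf[of n] by (auto simp: D_Suc)
  have D_antimono: "D m \<subseteq> D n" if "n \<le> m" for n m
    using that by (induction m rule: dec_induct) (use D_step in blast)+
  have "b n < b (Suc n)" for n
  proof -
    have "b (Suc n) \<in> D n" "b (Suc n) \<noteq> b n" using b_in[of "Suc n"] D_step by blast+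
    moreover have "b n \<le> b (Suc n)"
      unfolding b_def[of n] using \<open>b (Suc n) \<in> D n\<close> by (rule Least_le)
    ultimately show ?thesis by simp
  qed
  then have "strict_mono b" by (rule strict_monoI_Suc)
  then show ?thesis
    using D0 b_in D_antimono P_D by (intro exI[of _ b] exI[of _ D]) (simp add: D_0)
qed

lemma fusion:
  fixes P :: "nat set \<Rightarrow> nat set \<Rightarrow> bool"
  assumes mono: "\<And>t C C'. P t C \<Longrightarrow> C' \<subseteq> C \<Longrightarrow> infinite C' \<Longrightarrow> P t C'"
    and dense: "\<And>t C. finite t \<Longrightarrow> infinite C \<Longrightarrow> \<exists>C'\<subseteq>C. infinite C' \<and> P t C'"
    and A: "infinite A"
  shows "\<exists>B\<subseteq>A. infinite B \<and> (\<forall>t. finite t \<and> t \<subseteq> B \<longrightarrow> P t (beyond B t))"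
proof -
  have "\<exists>(b :: nat \<Rightarrow> nat) D. strict_mono b \<and> D 0 \<subseteq> A \<and> P {} (D 0) \<and> (\<forall>n. b n \<in> D n)
    \<and> (\<forall>n m. n \<le> m \<longrightarrow> D m \<subseteq> D n) \<and> (\<forall>n t. t \<subseteq> {..b n} \<longrightarrow> P t (D (Suc n)))"
    by (rule fusion_sequence) (fact mono dense A)+
  then obtain b :: "nat \<Rightarrow> nat" and D where sm: "strict_mono b" and D0: "D 0 \<subseteq> A" "P {} (D 0)"
    and b_in: "\<forall>n. b n \<in> D n" and D_antimono: "\<forall>n m. n \<le> m \<longrightarrow> D m \<subseteq> D n"
    and P_D: "\<forall>n t. t \<subseteq> {..b n} \<longrightarrow> P t (D (Suc n))"
    by (elim exE conjE) assumption
  define B where "B = range b"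
  have B_inf: "infinite B"
    unfolding B_def using sm strict_mono_imp_inj_on range_inj_infinite by blast
  have B_sub: "B \<subseteq> D 0"
    unfolding B_def using b_in D_antimono by blast
  have "P t (beyond B t)" if t: "finite t" "t \<subseteq> B" for t
  proof (cases "t = {}")
    case True
    then show ?thesis using mono[OF D0(2) B_sub B_inf] by simp
  next
    case False
    then have "Max t \<in> range b" using t Max_in unfolding B_def by blast
    then obtain n where n: "b n = Max t" by (metis rangeE)
    have "t \<subseteq> {..b n}" using n t by auto
    then have "P t (D (Suc n))" using P_D by blast
    moreover have "beyond B t \<subseteq> D (Suc n)"
    proof
      fix x assume "x \<in> beyond B t"
      then obtain m where "x = b m" "b n < b m"
        using Max_in[OF t(1) False] n unfolding beyond_def B_def by auto
      then have "Suc n \<le> m" using sm by (simp add: strict_mono_less)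
      then show "x \<in> D (Suc n)"
        using b_in D_antimono \<open>x = b m\<close> by blast
    qed
    ultimately show ?thesis using mono infinite_beyond[OF B_inf t(1)] by blast
  qed
  then show ?thesis using B_sub D0(1) B_inf by blast
qed

section \<open>Ellentuck-open sets are completely Ramsey\<close>

definition completely_ramsey :: "nat set set \<Rightarrow> bool" where
  "completely_ramsey P \<longleftrightarrow> (\<forall>s A. finite s \<longrightarrow> infinite A \<longrightarrow>
     (\<exists>B\<subseteq>A. infinite B \<and> (Ell s B \<subseteq> P \<or> Ell s B \<inter> P = {})))"

definition ramsey_null :: "nat set set \<Rightarrow> bool" where
  "ramsey_null P \<longleftrightarrow> (\<forall>s A. finite s \<longrightarrow> infinite A \<longrightarrow> (\<exists>B\<subseteq>A. infinite B \<and> Ell s B \<inter> P = {}))"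

definition ellentuck_open :: "nat set set \<Rightarrow> bool" where
  "ellentuck_open P \<longleftrightarrow> (\<forall>Y\<in>P. \<exists>s A. finite s \<and> Y \<in> Ell s A \<and> Ell s A \<subseteq> P)"

lemma completely_ramseyE:
  assumes "completely_ramsey P" "finite s" "infinite A"
  obtains B where "B \<subseteq> A" "infinite B" "Ell s B \<subseteq> P \<or> Ell s B \<inter> P = {}"
  using assms unfolding completely_ramsey_def by blast

lemma ramsey_nullE:
  assumes "ramsey_null P" "finite s" "infinite A"
  obtains B where "B \<subseteq> A" "infinite B" "Ell s B \<inter> P = {}"
  using assms unfolding ramsey_null_def by blast

definition accepts :: "nat set set \<Rightarrow> nat set \<Rightarrow> nat set \<Rightarrow> bool" where
  "accepts P s C \<longleftrightarrow> Ell s C \<subseteq> P"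

definition rejects :: "nat set set \<Rightarrow> nat set \<Rightarrow> nat set \<Rightarrow> bool" where
  "rejects P s C \<longleftrightarrow> (\<forall>C'\<subseteq>C. infinite C' \<longrightarrow> \<not> accepts P s C')"

definition decides :: "nat set set \<Rightarrow> nat set \<Rightarrow> nat set \<Rightarrow> bool" where
  "decides P s B \<longleftrightarrow> (\<forall>t. finite t \<and> t \<subseteq> B \<longrightarrow>
     accepts P (s \<union> t) (beyond B t) \<or> rejects P (s \<union> t) (beyond B t))"

lemma accepts_mono: "accepts P s C \<Longrightarrow> C' \<subseteq> C \<Longrightarrow> accepts P s C'"
  unfolding accepts_def using Ell_mono by blast

lemma rejects_mono: "rejects P s C \<Longrightarrow> C' \<subseteq> C \<Longrightarrow> rejects P s C'"
  unfolding rejects_def by blast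

lemma exists_deciding:
  assumes "infinite A"
  shows "\<exists>B\<subseteq>A. infinite B \<and> decides P s B"
proof -
  have "\<exists>B\<subseteq>A. infinite B \<and> (\<forall>t. finite t \<and> t \<subseteq> B \<longrightarrow>
      accepts P (s \<union> t) (beyond B t) \<or> rejects P (s \<union> t) (beyond B t))"
  proof (rule fusion[OF _ _ assms])
    show "accepts P (s \<union> t) C' \<or> rejects P (s \<union> t) C'"
      if "accepts P (s \<union> t) C \<or> rejects P (s \<union> t) C" "C' \<subseteq> C" for t C C'
      using that accepts_mono rejects_mono by blast
    show "\<exists>C'\<subseteq>C. infinite C' \<and> (accepts P (s \<union> t) C' \<or> rejects P (s \<union> t) C')"
      if "infinite C" for t C
      using that unfolding rejects_def by blast
  qed
  then show ?thesis unfolding decides_def .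
qed

text \<open>If \<open>s \<union> t\<close> is rejected, only finitely many one-point extensions are accepted:
  otherwise the accepting points themselves would accept \<open>s \<union> t\<close>.\<close>
lemma few_accepting_extensions:
  assumes s: "finite s" and t: "finite t" and rej: "rejects P (s \<union> t) (beyond B t)"
  shows "finite {n \<in> beyond B t. accepts P (s \<union> insert n t) (beyond B (insert n t))}"
    (is "finite ?Acc")
proof (rule ccontr)
  assume inf: "infinite ?Acc"
  have "Ell (s \<union> t) ?Acc \<subseteq> P"
  proof
    fix Y assume Y: "Y \<in> Ell (s \<union> t) ?Acc"
    define n where "n = (LEAST x. x \<in> Y - (s \<union> t))"
    have "finite (s \<union> t)" using s t by simp
    note extension = Ell_least_extension[OF Y this, folded n_def]
    have n: "n \<in> ?Acc" by (rule extension(1))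
    have Yn: "Y \<in> Ell (insert n (s \<union> t)) {x \<in> ?Acc. n < x}" by (rule extension(2))
    have incl: "{x \<in> ?Acc. n < x} \<subseteq> beyond B (insert n t)"
    proof
      fix x assume "x \<in> {x \<in> ?Acc. n < x}"
      then have "x \<in> beyond B t" "n < x" by blast+
      then show "x \<in> beyond B (insert n t)" by (simp add: beyond_def)
    qed
    have stem: "insert n (s \<union> t) = s \<union> insert n t" by blast
    have "Y \<in> Ell (s \<union> insert n t) {x \<in> ?Acc. n < x}"
      using Yn by (simp only: stem)
    then have "Y \<in> Ell (s \<union> insert n t) (beyond B (insert n t))"
      by (rule subsetD[OF Ell_mono[OF incl]])
    moreover have "accepts P (s \<union> insert n t) (beyond B (insert n t))"
      using n by blast
    ultimately show "Y \<in> P"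
      unfolding accepts_def by blast
  qed
  then have "accepts P (s \<union> t) ?Acc"
    by (simp only: accepts_def[of P "s \<union> t" ?Acc])
  moreover have "?Acc \<subseteq> beyond B t" by blast
  ultimately show False
    using rej[unfolded rejects_def, rule_format, OF _ inf] by blast
qed

lemma rejecting_extensions:
  assumes s: "finite s" and t: "finite t" "t \<subseteq> B" and dec: "decides P s B"
    and rej: "rejects P (s \<union> t) (beyond B t)" and C: "infinite C"
  shows "\<exists>C'\<subseteq>C. infinite C' \<and>
    (\<forall>n\<in>C' \<inter> beyond B t. rejects P (s \<union> insert n t) (beyond B (insert n t)))"
proof -
  define Acc where "Acc = {n \<in> beyond B t. accepts P (s \<union> insert n t) (beyond B (insert n t))}"
  have "finite Acc"
    unfolding Acc_def using few_accepting_extensions[OF s t(1) rej] .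
  then have "infinite (C - Acc)" using C by simp
  moreover have "rejects P (s \<union> insert n t) (beyond B (insert n t))"
    if n: "n \<in> (C - Acc) \<inter> beyond B t" for n
  proof -
    have "finite (insert n t)" "insert n t \<subseteq> B"
      using n t unfolding beyond_def by auto
    moreover have "\<not> accepts P (s \<union> insert n t) (beyond B (insert n t))"
      using n unfolding Acc_def by blast
    ultimately show ?thesis
      using dec unfolding decides_def by blast
  qed
  ultimately show ?thesis by blast
qed

lemma rejection_propagates:
  assumes s: "finite s" and B: "infinite B" and dec: "decides P s B" and rej: "rejects P s B"
  shows "\<exists>D\<subseteq>B. infinite D \<and> (\<forall>t. finite t \<and> t \<subseteq> D \<longrightarrow> rejects P (s \<union> t) (beyond B t))"
proof -
  define good where "good t C \<longleftrightarrow> (t \<subseteq> B \<and> rejects P (s \<union> t) (beyond B t) \<longrightarrow>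
      (\<forall>n\<in>C \<inter> beyond B t. rejects P (s \<union> insert n t) (beyond B (insert n t))))" for t C
  have good_mono: "good t C'" if "good t C" "C' \<subseteq> C" for t C C'
    using that unfolding good_def by blast
  have good_dense: "\<exists>C'\<subseteq>C. infinite C' \<and> good t C'" if "finite t" "infinite C" for t C
    using rejecting_extensions[OF s \<open>finite t\<close> _ dec _ \<open>infinite C\<close>] \<open>infinite C\<close>
    unfolding good_def by blast
  have "\<exists>D\<subseteq>B. infinite D \<and> (\<forall>t. finite t \<and> t \<subseteq> D \<longrightarrow> good t (beyond D t))"
    by (rule fusion) (use good_mono good_dense B in auto)
  then obtain D where D: "D \<subseteq> B" "infinite D"
    and good: "\<forall>t. finite t \<and> t \<subseteq> D \<longrightarrow> good t (beyond D t)"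
    by blast
  have "rejects P (s \<union> t) (beyond B t)" if "finite t" "t \<subseteq> D" for t
    using that
  proof (induction t rule: finite_linorder_max_induct)
    case empty
    then show ?case using rej by simp
  next
    case (insert n t)
    then have t: "t \<subseteq> D" "t \<subseteq> B" and n: "n \<in> beyond D t"
      using D(1) unfolding beyond_def by auto
    have "rejects P (s \<union> t) (beyond B t)"
      using insert.IH t(1) by blast
    moreover have "good t (beyond D t)"
      using good insert.hyps(1) t(1) by blast
    ultimately have "\<forall>m\<in>beyond D t \<inter> beyond B t. rejects P (s \<union> insert m t) (beyond B (insert m t))"
      using t(2) unfolding good_def by blast
    moreover have "n \<in> beyond B t"
      using n beyond_mono[OF D(1)] by blast
    ultimately show ?case
      using n by blast
  qed
  then show ?thesis using D by blast
qed

text \<open>If all extensions inside \<open>D\<close> are rejected, then \<open>[s, D]\<close> misses the open set \<open>P\<close>, since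
  a point of \<open>P\<close> has a neighbourhood in \<open>P\<close> that would be accepted.\<close>
lemma rejection_excludes_open:
  assumes P: "ellentuck_open P" and s: "finite s" and DB: "D \<subseteq> B"
    and rej: "\<And>t. finite t \<Longrightarrow> t \<subseteq> D \<Longrightarrow> rejects P (s \<union> t) (beyond B t)"
  shows "Ell s D \<inter> P = {}"
proof (rule ccontr)
  assume "Ell s D \<inter> P \<noteq> {}"
  then obtain Y where YD: "Y \<in> Ell s D" and "Y \<in> P" by blast
  then obtain u E where u: "finite u" and YE: "Y \<in> Ell u E" and EP: "Ell u E \<subseteq> P"
    using P unfolding ellentuck_open_def by blast
  define a where "a = Suc (Max (insert 0 u))"
  have u_below: "x < a" if "x \<in> u" for x
    using u that unfolding a_def by (simp add: le_imp_less_Suc)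
  define t where "t = {y \<in> Y - s. y < a}"
  note restart = Ell_restart[OF YD, of a, folded t_def]
  have t: "finite t" "t \<subseteq> D" and Yt: "Y \<in> Ell (s \<union> t) (beyond D t)"
    by (fact restart)+
  define C where "C = Y - (s \<union> t)"
  have "C \<subseteq> beyond B t"
    using Yt beyond_mono[OF DB] unfolding C_def Ell_def by blast
  moreover have "infinite C"
    using Yt s t(1) unfolding C_def Ell_def by simp
  moreover have "accepts P (s \<union> t) C"
    unfolding accepts_def
  proof
    fix Z assume Z: "Z \<in> Ell (s \<union> t) C"
    have "u \<subseteq> Y" using YE unfolding Ell_def by blast
    then have "u \<subseteq> s \<union> t" using u_below unfolding t_def by blast
    moreover have "Z \<subseteq> Y" using Z Yt unfolding C_def Ell_def by blast
    ultimately have "Z \<in> Ell u E" using Z YE unfolding Ell_def by blast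
    then show "Z \<in> P" using EP by blast
  qed
  ultimately show False
    using rej[OF t] unfolding rejects_def by blast
qed

theorem ellentuck_open_completely_ramsey:
  assumes "ellentuck_open P"
  shows "completely_ramsey P"
  unfolding completely_ramsey_def
proof (intro allI impI)
  fix s A :: "nat set" assume s: "finite s" and A: "infinite A"
  obtain B where B: "B \<subseteq> A" "infinite B" and dec: "decides P s B"
    using exists_deciding[OF A] by blast
  have "accepts P s B \<or> rejects P s B"
    using dec[unfolded decides_def, rule_format, of "{}"] by simp
  then show "\<exists>B\<subseteq>A. infinite B \<and> (Ell s B \<subseteq> P \<or> Ell s B \<inter> P = {})"
  proof
    assume "accepts P s B"
    then show ?thesis using B unfolding accepts_def by blast
  next
    assume "rejects P s B"
    then obtain D where D: "D \<subseteq> B" "infinite D"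
      and rej: "\<forall>t. finite t \<and> t \<subseteq> D \<longrightarrow> rejects P (s \<union> t) (beyond B t)"
      using rejection_propagates[OF s B(2) dec] by blast
    have "Ell s D \<inter> P = {}"
      by (rule rejection_excludes_open[OF assms s D(1)]) (use rej in blast)
    then show ?thesis using D B(1) by blast
  qed
qed

section \<open>Closure properties of completely Ramsey sets\<close>

lemma ramsey_null_subset:
  assumes "ramsey_null P" "Q \<subseteq> P"
  shows "ramsey_null Q"
  unfolding ramsey_null_def
proof (intro allI impI)
  fix s A :: "nat set" assume "finite s" "infinite A"
  with assms(1) obtain B where "B \<subseteq> A" "infinite B" "Ell s B \<inter> P = {}"
    by (rule ramsey_nullE)
  then show "\<exists>B\<subseteq>A. infinite B \<and> Ell s B \<inter> Q = {}"
    using assms(2) by blast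
qed

lemma ramsey_null_completely_ramsey: "ramsey_null P \<Longrightarrow> completely_ramsey P"
  unfolding ramsey_null_def completely_ramsey_def by blast

lemma completely_ramsey_Compl:
  assumes "completely_ramsey P"
  shows "completely_ramsey (- P)"
  unfolding completely_ramsey_def
proof (intro allI impI)
  fix s A :: "nat set" assume "finite s" "infinite A"
  with assms obtain B where "B \<subseteq> A" "infinite B" "Ell s B \<subseteq> P \<or> Ell s B \<inter> P = {}"
    by (rule completely_ramseyE)
  moreover have "Ell s B \<subseteq> - P \<longleftrightarrow> Ell s B \<inter> P = {}" by blast
  ultimately show "\<exists>B\<subseteq>A. infinite B \<and> (Ell s B \<subseteq> - P \<or> Ell s B \<inter> - P = {})"
    by blast
qed

lemma completely_ramsey_UNIV: "completely_ramsey UNIV"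
  unfolding completely_ramsey_def by blast

lemma completely_ramsey_Int:
  assumes P: "completely_ramsey P" and Q: "completely_ramsey Q"
  shows "completely_ramsey (P \<inter> Q)"
  unfolding completely_ramsey_def
proof (intro allI impI)
  fix s A :: "nat set" assume s: "finite s" and A: "infinite A"
  obtain B where B: "B \<subseteq> A" "infinite B" "Ell s B \<subseteq> P \<or> Ell s B \<inter> P = {}"
    using P s A by (rule completely_ramseyE)
  obtain C where C: "C \<subseteq> B" "infinite C" "Ell s C \<subseteq> Q \<or> Ell s C \<inter> Q = {}"
    using Q s B(2) by (rule completely_ramseyE)
  have "Ell s C \<subseteq> Ell s B" using C(1) by (rule Ell_mono)
  then have "Ell s C \<subseteq> P \<inter> Q \<or> Ell s C \<inter> (P \<inter> Q) = {}"
    using B(3) C(3) by blast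
  then show "\<exists>C\<subseteq>A. infinite C \<and> (Ell s C \<subseteq> P \<inter> Q \<or> Ell s C \<inter> (P \<inter> Q) = {})"
    using B(1) C(1,2) by blast
qed

lemma completely_ramsey_Diff:
  "completely_ramsey P \<Longrightarrow> completely_ramsey Q \<Longrightarrow> completely_ramsey (P - Q)"
  unfolding Diff_eq by (intro completely_ramsey_Int completely_ramsey_Compl)

lemma completely_ramsey_INT_finite:
  "finite I \<Longrightarrow> (\<And>i. i \<in> I \<Longrightarrow> completely_ramsey (P i)) \<Longrightarrow> completely_ramsey (\<Inter>i\<in>I. P i)"
  by (induction I rule: finite_induct) (simp_all add: completely_ramsey_UNIV completely_ramsey_Int)

text \<open>Only infinite sets matter, since all neighbourhoods consist of infinite sets.\<close>
lemma completely_ramsey_restrict_infinite: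
  "completely_ramsey (P \<inter> {Y. infinite Y}) \<longleftrightarrow> completely_ramsey P"
proof -
  have "Ell s B \<inter> {Y. infinite Y} = Ell s B" for s B
    using Ell_infinite by blast
  then have "Ell s B \<subseteq> P \<inter> {Y. infinite Y} \<longleftrightarrow> Ell s B \<subseteq> P"
    and "Ell s B \<inter> (P \<inter> {Y. infinite Y}) = {} \<longleftrightarrow> Ell s B \<inter> P = {}" for s B
    by blast+
  then show ?thesis
    unfolding completely_ramsey_def by simp
qed

lemma ramsey_null_Un:
  assumes P: "ramsey_null P" and Q: "ramsey_null Q"
  shows "ramsey_null (P \<union> Q)"
  unfolding ramsey_null_def
proof (intro allI impI)
  fix s A :: "nat set" assume s: "finite s" and A: "infinite A"
  obtain B where B: "B \<subseteq> A" "infinite B" "Ell s B \<inter> P = {}"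
    using P s A by (rule ramsey_nullE)
  obtain C where C: "C \<subseteq> B" "infinite C" "Ell s C \<inter> Q = {}"
    using Q s B(2) by (rule ramsey_nullE)
  have "Ell s C \<subseteq> Ell s B" using C(1) by (rule Ell_mono)
  then show "\<exists>C\<subseteq>A. infinite C \<and> Ell s C \<inter> (P \<union> Q) = {}"
    using B C by blast
qed

lemma ramsey_null_finitely_many:
  fixes N :: "nat \<Rightarrow> nat set set" and K :: nat
  assumes N: "\<And>k. ramsey_null (N k)" and u: "finite u" and C: "infinite C"
  shows "\<exists>C'\<subseteq>C. infinite C' \<and> (\<forall>k\<le>K. Ell u C' \<inter> N k = {})"
proof (induction K)
  case 0
  obtain C' where C': "C' \<subseteq> C" "infinite C'" "Ell u C' \<inter> N 0 = {}"
    using N u C by (rule ramsey_nullE)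
  then have "\<forall>k\<le>0. Ell u C' \<inter> N k = {}" by simp
  then show ?case using C'(1,2) by blast
next
  case (Suc K)
  then obtain C1 where C1: "C1 \<subseteq> C" "infinite C1" "\<forall>k\<le>K. Ell u C1 \<inter> N k = {}"
    by blast
  obtain C2 where C2: "C2 \<subseteq> C1" "infinite C2" "Ell u C2 \<inter> N (Suc K) = {}"
    using N u C1(2) by (rule ramsey_nullE)
  have "Ell u C2 \<subseteq> Ell u C1" using C2(1) by (rule Ell_mono)
  have "Ell u C2 \<inter> N k = {}" if "k \<le> Suc K" for k
  proof (cases "k = Suc K")
    case False
    then have "k \<le> K" using that by simp
    then show ?thesis using C1(3) \<open>Ell u C2 \<subseteq> Ell u C1\<close> by blast
  qed (use C2(3) in simp)
  then have "\<forall>k\<le>Suc K. Ell u C2 \<inter> N k = {}" by blast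
  then show ?case using C1(1) C2(1,2) by blast
qed

lemma Ell_restart_large:
  assumes Y: "Y \<in> Ell s B" and s: "finite s"
  shows "\<exists>t. finite t \<and> t \<subseteq> B \<and> k \<le> card t \<and> Y \<in> Ell (s \<union> t) (beyond B t)"
proof -
  have "infinite (Y - s)" using Y s unfolding Ell_def by simp
  then obtain T where T: "finite T" "card T = k" "T \<subseteq> Y - s"
    using infinite_arbitrarily_large by blast
  define a where "a = Suc (Max (insert 0 T))"
  define t where "t = {y \<in> Y - s. y < a}"
  note t = Ell_restart[OF Y, of a, folded t_def]
  have "T \<subseteq> t"
  proof
    fix x assume "x \<in> T"
    then have "x \<le> Max (insert 0 T)" using T(1) by simp
    then show "x \<in> t" using \<open>x \<in> T\<close> T(3) unfolding t_def a_def by auto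
  qed
  then have "k \<le> card t" using T(2) t(1) card_mono by blast
  then show ?thesis using t by blast
qed

text \<open>Countable unions of Ramsey null sets are Ramsey null: by fusion, stems with \<open>k\<close> elements
  avoid the first \<open>k\<close> sets.\<close>
theorem ramsey_null_UN:
  fixes N :: "nat \<Rightarrow> nat set set"
  assumes N: "\<And>k. ramsey_null (N k)"
  shows "ramsey_null (\<Union>k. N k)"
  unfolding ramsey_null_def
proof (intro allI impI)
  fix s A :: "nat set" assume s: "finite s" and A: "infinite A"
  define avoids where "avoids t C \<longleftrightarrow> (\<forall>k\<le>card t. Ell (s \<union> t) C \<inter> N k = {})" for t C
  have "\<exists>B\<subseteq>A. infinite B \<and> (\<forall>t. finite t \<and> t \<subseteq> B \<longrightarrow> avoids t (beyond B t))"
  proof (rule fusion[OF _ _ A])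
    show "avoids t C'" if "avoids t C" "C' \<subseteq> C" for t C C'
      using that Ell_mono[of C' C] unfolding avoids_def by blast
    show "\<exists>C'\<subseteq>C. infinite C' \<and> avoids t C'" if "finite t" "infinite C" for t C
      unfolding avoids_def
      using ramsey_null_finitely_many[OF N _ that(2), where u="s \<union> t" and K="card t"] s that(1)
      by simp
  qed
  then obtain B where B: "B \<subseteq> A" "infinite B"
    and avoids: "\<forall>t. finite t \<and> t \<subseteq> B \<longrightarrow> avoids t (beyond B t)"
    by blast
  have "Ell s B \<inter> N k = {}" for k
  proof (rule ccontr)
    assume "Ell s B \<inter> N k \<noteq> {}"
    then obtain Y where Y: "Y \<in> Ell s B" "Y \<in> N k" by blast
    then obtain t where t: "finite t" "t \<subseteq> B" "k \<le> card t" "Y \<in> Ell (s \<union> t) (beyond B t)"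
      using Ell_restart_large[OF Y(1) s] by blast
    then have "Ell (s \<union> t) (beyond B t) \<inter> N k = {}"
      using avoids unfolding avoids_def by blast
    then show False using t(4) Y(2) by blast
  qed
  then show "\<exists>B\<subseteq>A. infinite B \<and> Ell s B \<inter> (\<Union>k. N k) = {}"
    using B by blast
qed

corollary ramsey_null_UN_countable:
  fixes N :: "'i::countable \<Rightarrow> nat set set"
  assumes "\<And>i. ramsey_null (N i)"
  shows "ramsey_null (\<Union>i. N i)"
proof -
  have "(\<Union>i. N i) = (\<Union>n. N (from_nat n))"
  proof (intro equalityI subsetI)
    fix x assume "x \<in> (\<Union>i. N i)"
    then obtain i where "x \<in> N i" by blast
    then have "x \<in> N (from_nat (to_nat i))" by simp
    then show "x \<in> (\<Union>n. N (from_nat n))" by blast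
  qed blast
  then show ?thesis
    using ramsey_null_UN[of "\<lambda>n. N (from_nat n)"] assms by simp
qed

lemma ellentuck_open_UN:
  assumes "\<And>k. ellentuck_open (U k)"
  shows "ellentuck_open (\<Union>k. U k)"
  unfolding ellentuck_open_def
proof
  fix Y assume "Y \<in> (\<Union>k. U k)"
  then obtain k where "Y \<in> U k" by blast
  then obtain s A where "finite s" "Y \<in> Ell s A" "Ell s A \<subseteq> U k"
    using assms[of k] unfolding ellentuck_open_def by blast
  then show "\<exists>s A. finite s \<and> Y \<in> Ell s A \<and> Ell s A \<subseteq> (\<Union>k. U k)" by blast
qed

text \<open>The Ellentuck interior; a completely Ramsey set differs from it by Ramsey null sets.\<close>
definition ellentuck_interior :: "nat set set \<Rightarrow> nat set set" where
  "ellentuck_interior P = {Y. \<exists>s B. finite s \<and> Y \<in> Ell s B \<and> Ell s B \<subseteq> P}"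

lemma ellentuck_open_interior: "ellentuck_open (ellentuck_interior P)"
  unfolding ellentuck_open_def
proof
  fix Y assume "Y \<in> ellentuck_interior P"
  then obtain s B where sB: "finite s" "Y \<in> Ell s B" "Ell s B \<subseteq> P"
    unfolding ellentuck_interior_def by blast
  then have "Ell s B \<subseteq> ellentuck_interior P"
    unfolding ellentuck_interior_def by blast
  then show "\<exists>s A. finite s \<and> Y \<in> Ell s A \<and> Ell s A \<subseteq> ellentuck_interior P"
    using sB(1,2) by blast
qed

lemma ramsey_null_outside_interior:
  assumes P: "completely_ramsey P"
  shows "ramsey_null (P - ellentuck_interior P)"
  unfolding ramsey_null_def
proof (intro allI impI)
  fix s A :: "nat set" assume s: "finite s" and A: "infinite A"
  obtain B where B: "B \<subseteq> A" "infinite B" "Ell s B \<subseteq> P \<or> Ell s B \<inter> P = {}"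
    using P s A by (rule completely_ramseyE)
  have "Ell s B \<subseteq> P \<Longrightarrow> Ell s B \<subseteq> ellentuck_interior P"
    unfolding ellentuck_interior_def using s by blast
  then have "Ell s B \<inter> (P - ellentuck_interior P) = {}" using B(3) by blast
  then show "\<exists>B\<subseteq>A. infinite B \<and> Ell s B \<inter> (P - ellentuck_interior P) = {}"
    using B(1,2) by blast
qed

lemma ramsey_null_interior_outside:
  assumes P: "completely_ramsey P"
  shows "ramsey_null (ellentuck_interior P - P)"
  unfolding ramsey_null_def
proof (intro allI impI)
  fix s A :: "nat set" assume s: "finite s" and A: "infinite A"
  let ?U = "ellentuck_interior P"
  obtain B where B: "B \<subseteq> A" "infinite B" "Ell s B \<subseteq> ?U \<or> Ell s B \<inter> ?U = {}"
    using ellentuck_open_completely_ramsey[OF ellentuck_open_interior] s A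
    by (rule completely_ramseyE)
  obtain C where C: "C \<subseteq> B" "infinite C" "Ell s C \<subseteq> P \<or> Ell s C \<inter> P = {}"
    using P s B(2) by (rule completely_ramseyE)
  have "Ell s C \<inter> (?U - P) = {}"
  proof (cases "Ell s B \<subseteq> ?U")
    case True
    have "s \<union> C \<in> Ell s C" using C(2) by (rule Ell_top)
    moreover have "s \<union> C \<in> ?U"
      using True Ell_mono[OF C(1)] calculation by blast
    then have "s \<union> C \<in> P"
      unfolding ellentuck_interior_def by blast
    ultimately have "Ell s C \<subseteq> P" using C(3) by blast
    then show ?thesis by blast
  next
    case False
    then show ?thesis using B(3) Ell_mono[OF C(1)] by blast
  qed
  then show "\<exists>C\<subseteq>A. infinite C \<and> Ell s C \<inter> (?U - P) = {}" using B(1) C(1,2) by blast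
qed

lemma open_approx_completely_ramsey:
  assumes U: "ellentuck_open U" and null: "ramsey_null (P - U)" "ramsey_null (U - P)"
  shows "completely_ramsey P"
  unfolding completely_ramsey_def
proof (intro allI impI)
  fix s A :: "nat set" assume s: "finite s" and A: "infinite A"
  obtain B where B: "B \<subseteq> A" "infinite B" "Ell s B \<subseteq> U \<or> Ell s B \<inter> U = {}"
    using ellentuck_open_completely_ramsey[OF U] s A by (rule completely_ramseyE)
  obtain C where C: "C \<subseteq> B" "infinite C" "Ell s C \<inter> ((P - U) \<union> (U - P)) = {}"
    using ramsey_null_Un[OF null] s B(2) by (rule ramsey_nullE)
  have "Ell s C \<subseteq> Ell s B" using C(1) by (rule Ell_mono)
  then have "Ell s C \<subseteq> P \<or> Ell s C \<inter> P = {}"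
    using B(3) C(3) by blast
  then show "\<exists>C\<subseteq>A. infinite C \<and> (Ell s C \<subseteq> P \<or> Ell s C \<inter> P = {})"
    using B(1) C(1,2) by blast
qed

theorem completely_ramsey_UN:
  fixes P :: "nat \<Rightarrow> nat set set"
  assumes P: "\<And>k. completely_ramsey (P k)"
  shows "completely_ramsey (\<Union>k. P k)"
proof (rule open_approx_completely_ramsey)
  let ?U = "\<lambda>k. ellentuck_interior (P k)"
  show "ellentuck_open (\<Union>k. ?U k)"
    by (rule ellentuck_open_UN) (rule ellentuck_open_interior)
  have "ramsey_null (\<Union>k. P k - ?U k)"
    by (rule ramsey_null_UN) (rule ramsey_null_outside_interior[OF P])
  then show "ramsey_null ((\<Union>k. P k) - (\<Union>k. ?U k))"
    by (rule ramsey_null_subset) blast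
  have "ramsey_null (\<Union>k. ?U k - P k)"
    by (rule ramsey_null_UN) (rule ramsey_null_interior_outside[OF P])
  then show "ramsey_null ((\<Union>k. ?U k) - (\<Union>k. P k))"
    by (rule ramsey_null_subset) blast
qed

section \<open>Closure under the Souslin operation\<close>

definition ramsey_hull :: "nat set set \<Rightarrow> nat set set" where
  "ramsey_hull Q = - {Y. \<exists>s B. finite s \<and> Y \<in> Ell s B \<and> Ell s B \<inter> Q = {}}"

lemma subset_ramsey_hull: "Q \<subseteq> ramsey_hull Q"
  unfolding ramsey_hull_def by blast

lemma completely_ramsey_hull: "completely_ramsey (ramsey_hull Q)"
proof -
  have "ellentuck_open {Y. \<exists>s B. finite s \<and> Y \<in> Ell s B \<and> Ell s B \<inter> Q = {}}"
    (is "ellentuck_open ?V")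
    unfolding ellentuck_open_def
  proof
    fix Y assume "Y \<in> ?V"
    then obtain s B where sB: "finite s" "Y \<in> Ell s B" "Ell s B \<inter> Q = {}" by blast
    then have "Ell s B \<subseteq> ?V" by blast
    then show "\<exists>s A. finite s \<and> Y \<in> Ell s A \<and> Ell s A \<subseteq> ?V" using sB(1,2) by blast
  qed
  then show ?thesis
    unfolding ramsey_hull_def by (intro completely_ramsey_Compl ellentuck_open_completely_ramsey)
qed

lemma ramsey_null_hull_gap:
  assumes W: "completely_ramsey W" "W \<subseteq> ramsey_hull Q - Q"
  shows "ramsey_null W"
  unfolding ramsey_null_def
proof (intro allI impI)
  fix s A :: "nat set" assume s: "finite s" and A: "infinite A"
  obtain B where B: "B \<subseteq> A" "infinite B" "Ell s B \<subseteq> W \<or> Ell s B \<inter> W = {}"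
    using W(1) s A by (rule completely_ramseyE)
  have "\<not> Ell s B \<subseteq> W"
  proof
    assume BW: "Ell s B \<subseteq> W"
    then have "Ell s B \<inter> Q = {}" using W(2) by blast
    then have "s \<union> B \<notin> ramsey_hull Q"
      using s Ell_top[OF B(2)] unfolding ramsey_hull_def by blast
    moreover have "s \<union> B \<in> ramsey_hull Q" using BW Ell_top[OF B(2)] W(2) by blast
    ultimately show False by blast
  qed
  then show "\<exists>B\<subseteq>A. infinite B \<and> Ell s B \<inter> W = {}" using B by blast
qed

definition souslin_part :: "(nat list \<Rightarrow> 'b set) \<Rightarrow> nat list \<Rightarrow> 'b set" where
  "souslin_part S l = {Y. \<exists>\<sigma>. map \<sigma> [0..<length l] = l \<and> (\<forall>n. Y \<in> S (map \<sigma> [0..<Suc n]))}"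

definition souslin_prefix :: "(nat list \<Rightarrow> 'b set) \<Rightarrow> nat list \<Rightarrow> 'b set" where
  "souslin_prefix S l = (\<Inter>i<length l. S (take (Suc i) l))"

lemma souslin_part_Nil: "souslin_part S [] = souslin S"
  unfolding souslin_part_def souslin_def by auto

lemma souslin_part_split: "souslin_part S l \<subseteq> (\<Union>k. souslin_part S (l @ [k]))"
proof
  fix Y assume "Y \<in> souslin_part S l"
  then obtain \<sigma> where \<sigma>: "map \<sigma> [0..<length l] = l" "\<forall>n. Y \<in> S (map \<sigma> [0..<Suc n])"
    unfolding souslin_part_def by blast
  then have "map \<sigma> [0..<length (l @ [\<sigma> (length l)])] = l @ [\<sigma> (length l)]" by simp
  then have "Y \<in> souslin_part S (l @ [\<sigma> (length l)])"
    unfolding souslin_part_def using \<sigma>(2) by blast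
  then show "Y \<in> (\<Union>k. souslin_part S (l @ [k]))" by blast
qed

lemma souslin_part_prefix: "souslin_part S l \<subseteq> souslin_prefix S l"
proof
  fix Y assume "Y \<in> souslin_part S l"
  then obtain \<sigma> where \<sigma>: "map \<sigma> [0..<length l] = l" "\<forall>n. Y \<in> S (map \<sigma> [0..<Suc n])"
    unfolding souslin_part_def by blast
  have "take (Suc i) l = map \<sigma> [0..<Suc i]" if "i < length l" for i
    using that by (subst \<sigma>(1)[symmetric]) (simp add: take_map)
  then show "Y \<in> souslin_prefix S l"
    unfolding souslin_prefix_def using \<sigma>(2) by simp
qed

lemma infinite_branch:
  assumes "Q []" and step: "\<And>l. Q l \<Longrightarrow> \<exists>k. Q (l @ [k])"
  shows "\<exists>\<sigma>. \<forall>n. Q (map \<sigma> [0..<n])"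
proof -
  define next_branch where "next_branch l = l @ [SOME k. Q (l @ [k])]" for l
  define L where "L n = (next_branch ^^ n) []" for n
  have Q_L: "Q (L n)" for n
  proof (induction n)
    case 0
    then show ?case using assms(1) by (simp add: L_def)
  next
    case (Suc n)
    then show ?case
      unfolding L_def next_branch_def by (simp add: someI_ex[OF step])
  qed
  have L_Suc: "L (Suc n) = L n @ [L (Suc n) ! n]" and len: "length (L n) = n" for n
  proof -
    show "length (L n) = n" by (induction n) (simp_all add: L_def next_branch_def)
    then show "L (Suc n) = L n @ [L (Suc n) ! n]" by (simp add: L_def next_branch_def nth_append)
  qed
  define \<sigma> where "\<sigma> n = L (Suc n) ! n" for n
  have "L n = map \<sigma> [0..<n]" for n
  proof (induction n)
    case 0
    then show ?case by (simp add: L_def)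
  next
    case (Suc n)
    then show ?case using L_Suc[of n] by (simp add: \<sigma>_def)
  qed
  then show ?thesis using Q_L by metis
qed

lemma souslin_prefix_last:
  assumes Y: "Y \<in> souslin_prefix S l" and l: "l \<noteq> []"
  shows "Y \<in> S l"
proof -
  have "length l - 1 < length l" using l by simp
  then have "Y \<in> S (take (Suc (length l - 1)) l)"
    using Y unfolding souslin_prefix_def by blast
  moreover have "Suc (length l - 1) = length l" using l by simp
  ultimately show ?thesis by simp
qed

lemma souslin_branch:
  assumes "\<forall>n. Y \<in> souslin_prefix S (map \<sigma> [0..<n])"
  shows "Y \<in> souslin S"
proof -
  have "Y \<in> S (map \<sigma> [0..<Suc n])" for n
    by (rule souslin_prefix_last) (use assms in \<open>simp_all del: upt_Suc\<close>)
  then show ?thesis unfolding souslin_def by blast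
qed

text \<open>The defect sets
  \<open>souslin_hull S l - (\<Union>k. souslin_hull S (l @ [k]))\<close> are Ramsey null, and outside all
  of them a point of the top hull follows a branch into \<open>souslin S\<close>.\<close>
definition souslin_hull :: "(nat list \<Rightarrow> nat set set) \<Rightarrow> nat list \<Rightarrow> nat set set" where
  "souslin_hull S l = ramsey_hull (souslin_part S l) \<inter> souslin_prefix S l"

lemma completely_ramsey_souslin_hull:
  assumes S: "\<And>l. completely_ramsey (S l)"
  shows "completely_ramsey (souslin_hull S l)"
proof -
  have "completely_ramsey (souslin_prefix S l)"
    unfolding souslin_prefix_def by (rule completely_ramsey_INT_finite) (simp_all add: S)
  then show ?thesis
    unfolding souslin_hull_def by (intro completely_ramsey_Int completely_ramsey_hull)
qed

lemma souslin_part_hull: "souslin_part S l \<subseteq> souslin_hull S l"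
  unfolding souslin_hull_def by (rule Int_greatest[OF subset_ramsey_hull souslin_part_prefix])

lemma ramsey_null_souslin_defect:
  assumes S: "\<And>l. completely_ramsey (S l)"
  shows "ramsey_null (souslin_hull S l - (\<Union>k. souslin_hull S (l @ [k])))"
proof (rule ramsey_null_hull_gap)
  show "completely_ramsey (souslin_hull S l - (\<Union>k. souslin_hull S (l @ [k])))"
    using completely_ramsey_souslin_hull[OF S]
    by (intro completely_ramsey_Diff completely_ramsey_UN)
  have "(\<Union>k. souslin_part S (l @ [k])) \<subseteq> (\<Union>k. souslin_hull S (l @ [k]))"
    by (intro UN_mono subset_refl souslin_part_hull)
  with souslin_part_split have "souslin_part S l \<subseteq> (\<Union>k. souslin_hull S (l @ [k]))"
    by (rule subset_trans)
  moreover have "souslin_hull S l \<subseteq> ramsey_hull (souslin_part S l)"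
    unfolding souslin_hull_def by (rule Int_lower1)
  ultimately show "souslin_hull S l - (\<Union>k. souslin_hull S (l @ [k]))
      \<subseteq> ramsey_hull (souslin_part S l) - souslin_part S l"
    by blast
qed

lemma souslin_hull_defect:
  assumes Y: "Y \<in> souslin_hull S []" "Y \<notin> souslin S"
  shows "\<exists>l. Y \<in> souslin_hull S l - (\<Union>k. souslin_hull S (l @ [k]))"
proof (rule ccontr)
  assume "\<nexists>l. Y \<in> souslin_hull S l - (\<Union>k. souslin_hull S (l @ [k]))"
  then have step: "\<exists>k. Y \<in> souslin_hull S (l @ [k])" if "Y \<in> souslin_hull S l" for l
    using that by blast
  obtain \<sigma> where "\<forall>n. Y \<in> souslin_hull S (map \<sigma> [0..<n])"
    using infinite_branch[of "\<lambda>l. Y \<in> souslin_hull S l", OF Y(1) step] by blast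
  then have "\<forall>n. Y \<in> souslin_prefix S (map \<sigma> [0..<n])"
    unfolding souslin_hull_def by blast
  then have "Y \<in> souslin S" by (rule souslin_branch)
  then show False using Y(2) by blast
qed

theorem completely_ramsey_souslin:
  assumes S: "\<And>l. completely_ramsey (S l)"
  shows "completely_ramsey (souslin S)"
proof -
  let ?H = "souslin_hull S"
  have "ramsey_null (\<Union>l. ?H l - (\<Union>k. ?H (l @ [k])))"
    by (rule ramsey_null_UN_countable) (rule ramsey_null_souslin_defect[OF S])
  moreover have "?H [] - souslin S \<subseteq> (\<Union>l. ?H l - (\<Union>k. ?H (l @ [k])))"
  proof
    fix Y assume "Y \<in> ?H [] - souslin S"
    then obtain l where "Y \<in> ?H l - (\<Union>k. ?H (l @ [k]))"
      using souslin_hull_defect by blast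
    then show "Y \<in> (\<Union>l. ?H l - (\<Union>k. ?H (l @ [k])))" by (rule UN_I[OF UNIV_I])
  qed
  ultimately have "ramsey_null (?H [] - souslin S)"
    by (rule ramsey_null_subset)
  then have "completely_ramsey (?H [] - (?H [] - souslin S))"
    by (intro completely_ramsey_Diff[OF completely_ramsey_souslin_hull[OF S]] ramsey_null_completely_ramsey)
  moreover have "souslin S \<subseteq> ?H []"
    using souslin_part_hull[of S "[]"] unfolding souslin_part_Nil .
  then have "?H [] - (?H [] - souslin S) = souslin S" by (rule double_diff) (rule order_refl)
  ultimately show ?thesis by simp
qed

section \<open>C-measurable preimages and homogeneous sets\<close>

theorem completely_ramsey_preimage:
  fixes F :: "nat set \<Rightarrow> 'a set"
  assumes F_Pinf: "\<And>Z. infinite Z \<Longrightarrow> F Z \<in> Pinf X"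
    and F_cont: "\<And>U. cantor_open X U \<Longrightarrow> ellentuck_open {Z. infinite Z \<and> F Z \<in> U}"
    and \<Y>: "\<Y> \<in> Cmeas X"
  shows "completely_ramsey {Z. F Z \<in> \<Y>}"
  using \<Y>
proof (induction rule: Cmeas.induct)
  case (open_in U)
  have "{Z. F Z \<in> U \<inter> Pinf X} \<inter> {Y. infinite Y} = {Z. infinite Z \<and> F Z \<in> U}"
    using F_Pinf by auto
  moreover have "completely_ramsey {Z. infinite Z \<and> F Z \<in> U}"
    by (rule ellentuck_open_completely_ramsey[OF F_cont[OF open_in]])
  ultimately show ?case
    using completely_ramsey_restrict_infinite by metis
next
  case (compl \<A>)
  have "{Z. F Z \<in> Pinf X - \<A>} \<inter> {Y. infinite Y} = - {Z. F Z \<in> \<A>} \<inter> {Y. infinite Y}"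
    using F_Pinf by auto
  moreover have "completely_ramsey (- {Z. F Z \<in> \<A>})"
    by (rule completely_ramsey_Compl[OF compl.IH])
  ultimately show ?case
    using completely_ramsey_restrict_infinite by metis
next
  case (cunion \<A>)
  have "{Z. F Z \<in> (\<Union>n. \<A> n)} = (\<Union>n. {Z. F Z \<in> \<A> n})" by auto
  then show ?case
    using completely_ramsey_UN[OF cunion.IH] by simp
next
  case (souslin S)
  have "{Z. F Z \<in> souslin S} = souslin (\<lambda>l. {Z. F Z \<in> S l})"
    unfolding souslin_def by auto
  then show ?case
    using completely_ramsey_souslin[OF souslin.IH] by simp
qed

lemma completely_ramsey_homogeneous:
  assumes P: "completely_ramsey P"
    and dense: "\<And>H. infinite H \<Longrightarrow> \<exists>Z\<subseteq>H. infinite Z \<and> Z \<in> P"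
    and A: "infinite A"
  shows "\<exists>B\<subseteq>A. infinite B \<and> (\<forall>Z\<subseteq>B. infinite Z \<longrightarrow> Z \<in> P)"
proof -
  obtain B where B: "B \<subseteq> A" "infinite B" "Ell {} B \<subseteq> P \<or> Ell {} B \<inter> P = {}"
    using P finite.emptyI A by (rule completely_ramseyE)
  have "Ell {} B \<inter> P \<noteq> {}"
    using dense[OF B(2)] unfolding Ell_empty by blast
  then have "Ell {} B \<subseteq> P" using B(3) by blast
  then show ?thesis
    using B(1,2) unfolding Ell_empty by blast
qed

lemma card_enumerate_below:
  fixes S :: "nat set"
  assumes "infinite S"
  shows "card {y \<in> S. y < enumerate S n} = n"
proof -
  have "{y \<in> S. y < enumerate S n} = enumerate S ` {..<n}"
  proof
    show "{y \<in> S. y < enumerate S n} \<subseteq> enumerate S ` {..<n}"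
    proof
      fix y assume "y \<in> {y \<in> S. y < enumerate S n}"
      then have "y \<in> S" "y < enumerate S n" by auto
      moreover obtain i where "enumerate S i = y" using enumerate_Ex[OF assms \<open>y \<in> S\<close>] by blast
      ultimately show "y \<in> enumerate S ` {..<n}" using assms by auto
    qed
    show "enumerate S ` {..<n} \<subseteq> {y \<in> S. y < enumerate S n}"
      using assms enumerate_in_set by auto
  qed
  then show ?thesis
    using inj_enumerate[OF assms] by (simp add: card_image inj_on_subset)
qed

lemma enumerate_by_card:
  fixes S :: "nat set"
  assumes S: "infinite S" and x: "x \<in> S" and card: "card {y \<in> S. y < x} = n"
  shows "enumerate S n = x"
proof -
  obtain j where j: "enumerate S j = x" using enumerate_Ex[OF S x] by blast
  then have "j = n" using card card_enumerate_below[OF S, of j] by simp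
  then show ?thesis using j by simp
qed

lemma enumerate_subset_agree:
  fixes Y Z :: "nat set"
  assumes Y: "infinite Y" and Z: "infinite Z" and YZ: "Y \<subseteq> Z"
    and prefix: "\<And>j. j \<le> i \<Longrightarrow> enumerate Z j \<in> Y"
  shows "enumerate Y i = enumerate Z i"
proof (rule enumerate_by_card[OF Y prefix[OF order_refl]])
  have "{y \<in> Y. y < enumerate Z i} = {y \<in> Z. y < enumerate Z i}"
  proof
    show "{y \<in> Z. y < enumerate Z i} \<subseteq> {y \<in> Y. y < enumerate Z i}"
    proof
      fix y assume "y \<in> {y \<in> Z. y < enumerate Z i}"
      then have "y \<in> Z" "y < enumerate Z i" by auto
      moreover obtain j where "enumerate Z j = y" using enumerate_Ex[OF Z \<open>y \<in> Z\<close>] by blast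
      ultimately have "j \<le> i" "y = enumerate Z j" using Z by auto
      then show "y \<in> {y \<in> Y. y < enumerate Z i}" using prefix \<open>y < enumerate Z i\<close> by blast
    qed
  qed (use YZ in blast)
  then show "card {y \<in> Y. y < enumerate Z i} = i"
    using card_enumerate_below[OF Z] by simp
qed

lemma enumerate_range_strict_mono:
  assumes sm: "strict_mono (w :: nat \<Rightarrow> nat)"
  shows "enumerate (range w) n = w n"
proof (rule enumerate_by_card)
  show "infinite (range w)"
    using sm strict_mono_imp_inj_on range_inj_infinite by blast
  have "{y \<in> range w. y < w n} = w ` {..<n}"
    using sm by (auto simp: strict_mono_less)
  then show "card {y \<in> range w. y < w n} = n"
    using strict_mono_imp_inj_on[OF sm] by (simp add: card_image inj_on_subset)
qed simp

section \<open>The coding map\<close>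

lemma M_family_Pinf:
  assumes "M_family X \<D>"
  shows "\<D> \<subseteq> Pinf X"
  using assms unfolding M_family_def by (rule conjunct1)

lemma M_family_hereditary:
  assumes "M_family X \<D>" "A \<in> \<D>" "B \<subseteq> A" "infinite B"
  shows "B \<in> \<D>"
  using assms(1)[unfolded M_family_def, THEN conjunct2, THEN conjunct1] assms(2-4) by blast

lemma M_family_diagonal:
  fixes As :: "nat \<Rightarrow> 'a set"
  assumes "M_family X \<D>" "\<And>n. As n \<in> \<D>"
  obtains A where "A \<in> \<D>" "\<And>n. finite (A - (\<Union>i\<in>{n..}. As i))"
proof -
  have "\<forall>As :: nat \<Rightarrow> _. (\<forall>n. As n \<in> \<D>) \<longrightarrow> (\<exists>A\<in>\<D>. \<forall>n. finite (A - (\<Union>i\<in>{n..}. As i)))"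
    using assms(1) unfolding M_family_def by (rule conjunct2[THEN conjunct2])
  then have "(\<forall>n. As n \<in> \<D>) \<longrightarrow> (\<exists>A\<in>\<D>. \<forall>n. finite (A - (\<Union>i\<in>{n..}. As i)))"
    by (rule spec)
  moreover have "\<forall>n. As n \<in> \<D>" using assms(2) by (rule allI)
  ultimately obtain A where "A \<in> \<D>" "\<forall>n. finite (A - (\<Union>i\<in>{n..}. As i))"
    by (meson mp bexE)
  then show ?thesis using that by blast
qed

lemma injective_choice:
  fixes S :: "nat \<Rightarrow> 'a set"
  assumes inf: "\<And>n. infinite (S n)"
  shows "\<exists>x. inj x \<and> (\<forall>n. x n \<in> S n)"
proof -
  define pick where "pick n xs = (SOME x. x \<in> S n \<and> x \<notin> set xs)" for n xs
  have pick: "pick n xs \<in> S n \<and> pick n xs \<notin> set xs" for n xs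
  proof -
    have "\<not> S n \<subseteq> set xs" using inf[of n] finite_subset by blast
    then have "\<exists>x. x \<in> S n \<and> x \<notin> set xs" by blast
    then show ?thesis unfolding pick_def by (rule someI_ex)
  qed
  define L where "L n = rec_nat [] (\<lambda>n xs. xs @ [pick n xs]) n" for n
  define x where "x n = pick n (L n)" for n
  have L: "L n = map x [0..<n]" for n
    by (induction n) (simp_all add: L_def x_def)
  have fresh: "x i \<noteq> x j" if "i < j" for i j
  proof -
    have "x i \<in> set (L j)" using that by (simp add: L)
    moreover have "x j \<notin> set (L j)" using pick by (simp add: x_def)
    ultimately show ?thesis by metis
  qed
  have "inj x"
  proof (rule injI)
    fix i j assume eq: "x i = x j"
    show "i = j"
    proof (rule ccontr)
      assume "i \<noteq> j"
      then have "i < j \<or> j < i" by linarith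
      then show False using fresh eq by metis
    qed
  qed
  moreover have "x n \<in> S n" for n
    using pick by (simp add: x_def)
  ultimately show ?thesis by (intro exI[of _ x]) blast
qed

lemma injective_pair_choice:
  fixes C :: "nat \<Rightarrow> 'a set"
  assumes "\<And>c. infinite (C c)"
  shows "\<exists>g :: nat \<Rightarrow> nat \<Rightarrow> 'a. inj (\<lambda>(c, r). g c r) \<and> (\<forall>c r. g c r \<in> C c)"
proof -
  obtain x where x: "inj x" "\<And>n. x n \<in> C (fst (prod_decode n))"
    using injective_choice[of "\<lambda>n. C (fst (prod_decode n))"] assms by blast
  define g where "g c r = x (prod_encode (c, r))" for c r
  have "(\<lambda>(c, r). g c r) = x \<circ> prod_encode"
    by (auto simp: g_def)
  then have "inj (\<lambda>(c, r). g c r)"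
    using x(1) inj_prod_encode[of UNIV] by (simp add: inj_compose)
  moreover have "g c r \<in> C c" for c r
    using x(2)[of "prod_encode (c, r)"] by (simp add: g_def)
  ultimately show ?thesis by (intro exI[of _ g]) blast
qed

definition code_point :: "(nat \<Rightarrow> nat \<Rightarrow> 'a) \<Rightarrow> nat set \<Rightarrow> nat \<Rightarrow> 'a" where
  "code_point g Z k = g (enumerate Z (2 * k)) (enumerate Z (2 * k + 1))"

definition code :: "(nat \<Rightarrow> nat \<Rightarrow> 'a) \<Rightarrow> nat set \<Rightarrow> 'a set" where
  "code g Z = range (code_point g Z)"

lemma code_point_agree:
  assumes Y: "infinite Y" "Y \<subseteq> Z" and Z: "infinite Z"
    and prefix: "enumerate Z ` {..<2 * m} \<subseteq> Y" and k: "k < m"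
  shows "code_point g Y k = code_point g Z k"
proof -
  have "enumerate Y i = enumerate Z i" if "i < 2 * m" for i
    by (rule enumerate_subset_agree[OF Y(1) Z Y(2)]) (use prefix that in auto)
  then show ?thesis
    unfolding code_point_def using k by simp
qed

lemma finite_subset_code_prefix:
  assumes "finite F" "F \<subseteq> code g Z"
  shows "\<exists>K. F \<subseteq> code_point g Z ` {..<K}"
proof -
  obtain K0 where K0: "finite K0" "F = code_point g Z ` K0"
    using finite_subset_image[OF assms[unfolded code_def]] by blast
  have "K0 \<subseteq> {..<Suc (Max (insert 0 K0))}"
  proof
    fix k assume "k \<in> K0"
    then have "k \<le> Max (insert 0 K0)" using K0(1) by simp
    then show "k \<in> {..<Suc (Max (insert 0 K0))}" by simp
  qed
  then show ?thesis using K0(2) by blast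
qed

lemma interleaved_sequence:
  assumes "\<And>m. \<exists>c r. m < c \<and> c < r \<and> Q c r"
  shows "\<exists>w :: nat \<Rightarrow> nat. strict_mono w \<and> (\<forall>k. Q (w (2 * k)) (w (2 * k + 1)))"
proof -
  define pair where "pair m = (SOME p. m < fst p \<and> fst p < snd p \<and> Q (fst p) (snd p))" for m
  have pair: "m < fst (pair m) \<and> fst (pair m) < snd (pair m) \<and> Q (fst (pair m)) (snd (pair m))" for m
  proof -
    obtain c r where "m < c" "c < r" "Q c r" using assms[of m] by blast
    then have "\<exists>p. m < fst p \<and> fst p < snd p \<and> Q (fst p) (snd p)" by (intro exI[of _ "(c, r)"]) simp
    then show ?thesis unfolding pair_def by (rule someI_ex)
  qed
  define q where "q k = rec_nat (pair 0) (\<lambda>_ p. pair (snd p)) k" for k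
  have q_Suc: "q (Suc k) = pair (snd (q k))" for k
    by (simp add: q_def)
  have q: "fst (q k) < snd (q k) \<and> Q (fst (q k)) (snd (q k))" for k
    using pair by (cases k) (simp_all add: q_def)
  define w where "w n = (if even n then fst (q (n div 2)) else snd (q (n div 2)))" for n
  have "w n < w (Suc n)" for n
  proof (cases "even n")
    case True
    then show ?thesis using q[of "n div 2"] by (simp add: w_def)
  next
    case False
    then have "Suc n div 2 = Suc (n div 2)" by presburger
    then show ?thesis using False pair[of "snd (q (n div 2))"] by (simp add: w_def q_Suc)
  qed
  then have "strict_mono w" by (rule strict_monoI_Suc)
  moreover have "Q (w (2 * k)) (w (2 * k + 1))" for k
    using q[of k] by (simp add: w_def)
  ultimately show ?thesis by blast
qed

lemma code_contains_prefix:
  assumes F: "F \<subseteq> code_point g Z ` {..<m}"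
    and agree: "\<And>k. k < m \<Longrightarrow> code_point g Y k = code_point g Z k"
  shows "F \<subseteq> code g Y"
proof
  fix x assume "x \<in> F"
  then obtain k where "k < m" "x = code_point g Z k" using F by blast
  then have "x = code_point g Y k" using agree by simp
  then show "x \<in> code g Y" unfolding code_def by (rule range_eqI)
qed

lemma code_avoids:
  assumes Y: "infinite Y"
    and agree: "\<And>k. k < m \<Longrightarrow> code_point g Y k = code_point g Z k"
    and disjoint: "code g Z \<inter> G = {}"
    and bound: "\<And>c r. g c r \<in> G \<Longrightarrow> c < 2 * m"
  shows "code g Y \<inter> G = {}"
proof (rule ccontr)
  assume "code g Y \<inter> G \<noteq> {}"
  then obtain k where k: "code_point g Y k \<in> G" unfolding code_def by blast
  show False
  proof (cases "k < m")
    case True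
    then have "code_point g Z k \<in> G" using k agree by simp
    moreover have "code_point g Z k \<in> code g Z" unfolding code_def by (rule rangeI)
    ultimately show False using disjoint by blast
  next
    case False
    have "enumerate Y (2 * k) < 2 * m" using bound k unfolding code_point_def by blast
    moreover have "2 * k \<le> enumerate Y (2 * k)" by (rule le_enumerate[OF Y])
    ultimately show False using False by simp
  qed
qed

locale coding =
  fixes X :: "'a set" and C :: "nat \<Rightarrow> 'a set" and g :: "nat \<Rightarrow> nat \<Rightarrow> 'a"
  assumes g_inj: "inj (\<lambda>(c, r). g c r)"
    and g_in: "\<And>c r. g c r \<in> C c"
    and C_sub: "\<And>c. C c \<subseteq> X"
begin

lemma g_eq_iff: "g c r = g c' r' \<longleftrightarrow> c = c' \<and> r = r'"
  using injD[OF g_inj, of "(c, r)" "(c', r')"] by auto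

lemma code_Pinf:
  assumes Z: "infinite Z"
  shows "code g Z \<in> Pinf X"
proof -
  have "inj (code_point g Z)"
  proof (rule injI)
    fix k k' assume "code_point g Z k = code_point g Z k'"
    then have "enumerate Z (2 * k) = enumerate Z (2 * k')"
      unfolding code_point_def g_eq_iff by blast
    then show "k = k'" using inj_enumerate[OF Z] by (simp add: inj_eq)
  qed
  then have "infinite (code g Z)"
    unfolding code_def by (rule range_inj_infinite)
  moreover have "code g Z \<subseteq> X"
    unfolding code_def code_point_def using g_in C_sub by blast
  ultimately show ?thesis unfolding Pinf_def by blast
qed

lemma code_almost_in_tails:
  assumes Z: "infinite Z"
  shows "finite (code g Z - (\<Union>i\<in>{n..}. C i))"
proof -
  have "code g Z - (\<Union>i\<in>{n..}. C i) \<subseteq> code_point g Z ` {..<n}"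
  proof
    fix x assume x: "x \<in> code g Z - (\<Union>i\<in>{n..}. C i)"
    then obtain k where k: "x = code_point g Z k" unfolding code_def by blast
    have "k < n"
    proof (rule ccontr)
      assume "\<not> k < n"
      then have "n \<le> enumerate Z (2 * k)" using le_enumerate[OF Z, of "2 * k"] by simp
      then have "x \<in> (\<Union>i\<in>{n..}. C i)" using k g_in unfolding code_point_def by blast
      then show False using x by blast
    qed
    then show "x \<in> code_point g Z ` {..<n}" using k by blast
  qed
  then show ?thesis by (rule finite_subset) simp
qed

lemma first_coordinates_bounded:
  assumes "finite G"
  shows "\<exists>M. \<forall>c r. g c r \<in> G \<longrightarrow> c < M"
proof -
  have "finite ((\<lambda>(c, r). g c r) -` G)"
    using assms g_inj by (rule finite_vimageI)
  then have "finite (fst ` ((\<lambda>(c, r). g c r) -` G))" by simp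
  then obtain M where M: "fst ` ((\<lambda>(c, r). g c r) -` G) \<subseteq> {..<M}"
    using finite_nat_bounded by blast
  have "c < M" if "g c r \<in> G" for c r
  proof -
    have "(c, r) \<in> (\<lambda>(c, r). g c r) -` G" using that by simp
    then have "c \<in> fst ` ((\<lambda>(c, r). g c r) -` G)" by (metis fst_conv image_eqI)
    then show ?thesis using M by blast
  qed
  then show ?thesis by blast
qed

lemma code_ellentuck_continuous:
  assumes U: "cantor_open X U"
  shows "ellentuck_open {Z. infinite Z \<and> code g Z \<in> U}"
  unfolding ellentuck_open_def
proof
  fix Z assume "Z \<in> {Z. infinite Z \<and> code g Z \<in> U}"
  then have Z: "infinite Z" and ZU: "code g Z \<in> U" by auto
  obtain F G where FG: "finite F" "finite G" "code g Z \<in> cyl X F G" "cyl X F G \<subseteq> U"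
    using U ZU unfolding cantor_open_def by blast
  have "F \<subseteq> code g Z" using FG(3) unfolding cyl_def by blast
  then obtain K where K: "F \<subseteq> code_point g Z ` {..<K}"
    using finite_subset_code_prefix[OF FG(1)] by blast
  obtain M where M: "\<And>c r. g c r \<in> G \<Longrightarrow> c < M"
    using first_coordinates_bounded[OF FG(2)] by blast
  define m where "m = K + M"
  define s where "s = enumerate Z ` {..<2 * m}"
  have s: "finite s" "s \<subseteq> Z"
    unfolding s_def by (auto intro: enumerate_in_set[OF Z])
  have "Ell s Z \<subseteq> {Z. infinite Z \<and> code g Z \<in> U}"
  proof
    fix Y assume "Y \<in> Ell s Z"
    then have Y: "infinite Y" "s \<subseteq> Y" "Y \<subseteq> Z" unfolding Ell_def using s(2) by auto
    have agree: "code_point g Y k = code_point g Z k" if "k < m" for k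
      using code_point_agree[OF Y(1,3) Z Y(2)[unfolded s_def] that] .
    have "F \<subseteq> code g Y"
      by (rule code_contains_prefix[OF K]) (use agree in \<open>simp add: m_def\<close>)
    moreover have "code g Y \<inter> G = {}"
    proof (rule code_avoids[OF Y(1) agree])
      show "code g Z \<inter> G = {}" using FG(3) unfolding cyl_def by blast
      show "c < 2 * m" if "g c r \<in> G" for c r using M[OF that] unfolding m_def by simp
    qed
    moreover have "code g Y \<subseteq> X" using code_Pinf[OF Y(1)] unfolding Pinf_def by blast
    ultimately have "code g Y \<in> cyl X F G" unfolding cyl_def by blast
    then show "Y \<in> {Z. infinite Z \<and> code g Z \<in> U}" using FG(4) Y(1) by blast
  qed
  moreover have "Z \<in> Ell s Z" using Z s(2) unfolding Ell_def by blast
  ultimately show "\<exists>s A. finite s \<and> Z \<in> Ell s A \<and> Ell s A \<subseteq> {Z. infinite Z \<and> code g Z \<in> U}"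
    using s(1) by blast
qed

lemma code_row_in_family:
  assumes D: "M_family X \<D>" and C: "C c \<in> \<D>" and R: "infinite R"
  shows "g c ` R \<in> \<D>"
proof (rule M_family_hereditary[OF D C])
  have "inj_on (g c) R"
    using g_eq_iff by (auto intro: inj_onI)
  then show "infinite (g c ` R)" using R finite_imageD by blast
  show "g c ` R \<subseteq> C c" using g_in by blast
qed

text \<open>Applying the M-family property to the rows over \<open>H\<close> gives a member \<open>V\<close> containing
  codes of pairs from \<open>H\<close> above every bound.\<close>
lemma pairs_in_diagonal:
  assumes D: "M_family X \<D>" and C: "\<And>n. C n \<in> \<D>" and H: "infinite H"
  obtains V where "V \<in> \<D>" "\<And>m. \<exists>c r. m < c \<and> c < r \<and> c \<in> H \<and> r \<in> H \<and> g c r \<in> V"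
proof -
  define As where "As k = g (enumerate H k) ` {r \<in> H. enumerate H k < r}" for k
  have "infinite {r \<in> H. enumerate H k < r}" for k
  proof -
    have "H - {..enumerate H k} \<subseteq> {r \<in> H. enumerate H k < r}" by auto
    moreover have "infinite (H - {..enumerate H k})" using H by simp
    ultimately show ?thesis using finite_subset by blast
  qed
  then have "As k \<in> \<D>" for k
    unfolding As_def by (rule code_row_in_family[OF D C])
  then obtain V where V: "V \<in> \<D>" and tails: "\<And>n. finite (V - (\<Union>i\<in>{n..}. As i))"
    using M_family_diagonal[OF D] by blast
  have "infinite V"
    using M_family_Pinf[OF D] V unfolding Pinf_def by blast
  have "\<exists>c r. m < c \<and> c < r \<and> c \<in> H \<and> r \<in> H \<and> g c r \<in> V" for m
  proof -
    have "V \<inter> (\<Union>i\<in>{Suc m..}. As i) \<noteq> {}"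
    proof
      assume "V \<inter> (\<Union>i\<in>{Suc m..}. As i) = {}"
      then have "V - (\<Union>i\<in>{Suc m..}. As i) = V" by blast
      then show False using tails[of "Suc m"] \<open>infinite V\<close> by simp
    qed
    then obtain i v where "Suc m \<le> i" "v \<in> V" "v \<in> As i" by blast
    then obtain r where r: "r \<in> H" "enumerate H i < r" "g (enumerate H i) r \<in> V"
      unfolding As_def by blast
    moreover have "m < enumerate H i"
      using le_enumerate[OF H, of i] \<open>Suc m \<le> i\<close> by simp
    moreover have "enumerate H i \<in> H" by (rule enumerate_in_set[OF H])
    ultimately show ?thesis by blast
  qed
  then show ?thesis using that V by blast
qed

lemma code_dense:
  assumes D: "M_family X \<D>" and C: "\<And>n. C n \<in> \<D>" and H: "infinite H"
  shows "\<exists>Z\<subseteq>H. infinite Z \<and> code g Z \<in> \<D>"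
proof -
  obtain V where V: "V \<in> \<D>" and pairs: "\<And>m. \<exists>c r. m < c \<and> c < r \<and> c \<in> H \<and> r \<in> H \<and> g c r \<in> V"
    using pairs_in_diagonal[OF D C H] by blast
  obtain w :: "nat \<Rightarrow> nat" where w: "strict_mono w" and wQ: "\<And>k. w (2 * k) \<in> H \<and> w (2 * k + 1) \<in> H \<and> g (w (2 * k)) (w (2 * k + 1)) \<in> V"
    using interleaved_sequence[of "\<lambda>c r. c \<in> H \<and> r \<in> H \<and> g c r \<in> V"] pairs by blast
  define Z where "Z = range w"
  have Z: "infinite Z"
    unfolding Z_def using w strict_mono_imp_inj_on range_inj_infinite by blast
  have "Z \<subseteq> H"
  proof
    fix z assume "z \<in> Z"
    then obtain n where "z = w n" unfolding Z_def by blast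
    moreover have "n = 2 * (n div 2) \<or> n = 2 * (n div 2) + 1" by presburger
    ultimately show "z \<in> H" using wQ[of "n div 2"] by metis
  qed
  moreover have "code g Z \<subseteq> V"
    unfolding code_def code_point_def Z_def enumerate_range_strict_mono[OF w] using wQ by blast
  then have "code g Z \<in> \<D>"
    using M_family_hereditary[OF D V] code_Pinf[OF Z] unfolding Pinf_def by blast
  ultimately show ?thesis using Z by blast
qed

end

text \<open>The diagonal property of \<open>\<A> \<inter> \<B>\<close>: apply complete Ramseyness of the preimages of
  \<open>\<A>\<close> and then of \<open>\<B>\<close>.\<close>
lemma M_family_Int_diagonal:
  fixes C :: "nat \<Rightarrow> 'a set"
  assumes \<A>: "\<A> \<in> Cmeas X" "M_family X \<A>" and \<B>: "\<B> \<in> Cmeas X" "M_family X \<B>"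
    and C: "\<And>n. C n \<in> \<A> \<inter> \<B>"
  shows "\<exists>D\<in>\<A> \<inter> \<B>. \<forall>n. finite (D - (\<Union>i\<in>{n..}. C i))"
proof -
  have C_\<A>: "C n \<in> \<A>" and C_\<B>: "C n \<in> \<B>" for n
    using C by blast+
  then have "C n \<in> Pinf X" for n
    using M_family_Pinf[OF \<A>(2)] by blast
  then have C_inf: "infinite (C n)" and C_X: "C n \<subseteq> X" for n
    unfolding Pinf_def by blast+
  obtain g :: "nat \<Rightarrow> nat \<Rightarrow> 'a" where g: "inj (\<lambda>(c, r). g c r)" "\<And>c r. g c r \<in> C c"
    using injective_pair_choice[of C, OF C_inf] by blast
  interpret coding X C g
    by (rule coding.intro) (use g C_X in simp_all)
  have CR_\<A>: "completely_ramsey {Z. code g Z \<in> \<A>}"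
    by (rule completely_ramsey_preimage[OF code_Pinf code_ellentuck_continuous \<A>(1)])
  have dense_\<A>: "\<exists>Z\<subseteq>H. infinite Z \<and> Z \<in> {Z. code g Z \<in> \<A>}" if "infinite H" for H
    using code_dense[OF \<A>(2) C_\<A> that] by simp
  obtain B1 where B1: "infinite B1"
    and in_\<A>: "\<forall>Z\<subseteq>B1. infinite Z \<longrightarrow> Z \<in> {Z. code g Z \<in> \<A>}"
    using completely_ramsey_homogeneous[OF CR_\<A> dense_\<A> infinite_UNIV_nat] by blast
  have CR_\<B>: "completely_ramsey {Z. code g Z \<in> \<B>}"
    by (rule completely_ramsey_preimage[OF code_Pinf code_ellentuck_continuous \<B>(1)])
  have dense_\<B>: "\<exists>Z\<subseteq>H. infinite Z \<and> Z \<in> {Z. code g Z \<in> \<B>}" if "infinite H" for H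
    using code_dense[OF \<B>(2) C_\<B> that] by simp
  obtain B2 where B2: "B2 \<subseteq> B1" "infinite B2"
    and in_\<B>: "\<forall>Z\<subseteq>B2. infinite Z \<longrightarrow> Z \<in> {Z. code g Z \<in> \<B>}"
    using completely_ramsey_homogeneous[OF CR_\<B> dense_\<B> B1] by blast
  have "code g B2 \<in> \<A>" using in_\<A> B2 by blast
  moreover have "code g B2 \<in> \<B>" using in_\<B> B2(2) by blast
  moreover have "\<forall>n. finite (code g B2 - (\<Union>i\<in>{n..}. C i))"
    using code_almost_in_tails[OF B2(2)] by blast
  ultimately show ?thesis by blast
qed

theorem proposition8:
  fixes X :: "'a set" and \<A> \<B> :: "'a set set"
  assumes "countable X"
    and "\<A> \<in> Cmeas X" and "\<B> \<in> Cmeas X"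
    and "M_family X \<A>" and "M_family X \<B>"
  shows "M_family X (\<A> \<inter> \<B>)"
  unfolding M_family_def
proof (intro conjI allI ballI impI)
  show "\<A> \<inter> \<B> \<subseteq> Pinf X"
    using M_family_Pinf[OF assms(4)] by blast
  show "B \<in> \<A> \<inter> \<B>" if "A \<in> \<A> \<inter> \<B>" "B \<subseteq> A \<and> infinite B" for A B
    using that M_family_hereditary[OF assms(4)] M_family_hereditary[OF assms(5)] by blast
  show "\<exists>A\<in>\<A> \<inter> \<B>. \<forall>n. finite (A - (\<Union>i\<in>{n..}. C i))"
    if "\<forall>n. C n \<in> \<A> \<inter> \<B>" for C :: "nat \<Rightarrow> 'a set"
    by (rule M_family_Int_diagonal[OF assms(2,4,3,5)]) (use that in blast)
qed

end
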